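(* There is an infinite family of directed graphs (with unit arc lengths) such that, with $n$ the number of vertices, the greedy algorithm g-HHL finds a hierarchical hub labeling of size $\Omega(n^{3/2})$ while the optimal hierarchical hub labeling has size $O(n)$.
   Context: For a directed graph $G=(V,E)$, $n=|V|$, a hub labeling assigns forward and backward labels $L_f(v),L_b(v)\subseteq V$ such that for every ordered pair $(u,w)$ with $w$ reachable from $u$, $L_f(u)\cap L_b(w)$ contains a vertex on a shortest $u$–$w$ path; its size is $\sum_v(|L_f(v)|+|L_b(v)|)$. It is hierarchical (HHL) if there is a bijection $\pi:V\to\{1,\dots,n\}$ with $u\in L_f(v)\cup L_b(v)\Rightarrow\pi(u)\le\pi(v)$. g-HHL: start with empty labels; $U$ is the set of uncovered pairs. For each not-yet-selected vertex $v$, the center graph is the bipartite graph with two copies $X,Y$ of $V$ and an arc $(u,w)$ for each $(u,w)\in U$ having a shortest $u$–$w$ path through $v$. Each iteration selects a not-yet-selected $v$ whose center graph has the most edges and adds $v$ to $L_f(u)$ for all non-isolated $u\in X$ and to $L_b(w)$ for all non-isolated $w\in Y$, until all pairs are covered. *)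

theory Defs
  imports Complex_Main
begin

text \<open>Directed graph given by a finite vertex set V and an arc set E \<subseteq> V \<times> V;
  all arcs have unit length, so path length = number of arcs.\<close>

definition walk :: "('a \<times> 'a) set \<Rightarrow> 'a list \<Rightarrow> bool" where
  "walk E p \<longleftrightarrow> p \<noteq> [] \<and> (\<forall>i. Suc i < length p \<longrightarrow> (p ! i, p ! Suc i) \<in> E)"

definition reach :: "('a \<times> 'a) set \<Rightarrow> 'a \<Rightarrow> 'a \<Rightarrow> bool" where
  "reach E u w \<longleftrightarrow> (\<exists>p. walk E p \<and> hd p = u \<and> last p = w)"

definition spath :: "('a \<times> 'a) set \<Rightarrow> 'a \<Rightarrow> 'a \<Rightarrow> 'a list \<Rightarrow> bool" where
  "spath E u w p \<longleftrightarrow> walk E p \<and> hd p = u \<and> last p = w \<and>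
     (\<forall>q. walk E q \<and> hd q = u \<and> last q = w \<longrightarrow> length p \<le> length q)"

definition on_sp :: "('a \<times> 'a) set \<Rightarrow> 'a \<Rightarrow> 'a \<Rightarrow> 'a \<Rightarrow> bool" where
  "on_sp E u w v \<longleftrightarrow> (\<exists>p. spath E u w p \<and> v \<in> set p)"

definition covered :: "('a \<times> 'a) set \<Rightarrow> ('a \<Rightarrow> 'a set) \<Rightarrow> ('a \<Rightarrow> 'a set) \<Rightarrow> 'a \<Rightarrow> 'a \<Rightarrow> bool" where
  "covered E Lf Lb u w \<longleftrightarrow> (\<exists>h \<in> Lf u \<inter> Lb w. on_sp E u w h)"

definition is_HL :: "'a set \<Rightarrow> ('a \<times> 'a) set \<Rightarrow> ('a \<Rightarrow> 'a set) \<Rightarrow> ('a \<Rightarrow> 'a set) \<Rightarrow> bool" where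
  "is_HL V E Lf Lb \<longleftrightarrow> (\<forall>v\<in>V. Lf v \<subseteq> V \<and> Lb v \<subseteq> V) \<and>
     (\<forall>u\<in>V. \<forall>w\<in>V. reach E u w \<longrightarrow> covered E Lf Lb u w)"

definition hl_size :: "'a set \<Rightarrow> ('a \<Rightarrow> 'a set) \<Rightarrow> ('a \<Rightarrow> 'a set) \<Rightarrow> nat" where
  "hl_size V Lf Lb = (\<Sum>v\<in>V. card (Lf v) + card (Lb v))"

definition is_HHL :: "'a set \<Rightarrow> ('a \<times> 'a) set \<Rightarrow> ('a \<Rightarrow> 'a set) \<Rightarrow> ('a \<Rightarrow> 'a set) \<Rightarrow> bool" where
  "is_HHL V E Lf Lb \<longleftrightarrow> is_HL V E Lf Lb \<and>
     (\<exists>\<pi>. bij_betw \<pi> V {1..card V} \<and> (\<forall>v\<in>V. \<forall>u \<in> Lf v \<union> Lb v. \<pi> u \<le> \<pi> v))"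

definition uncovered :: "'a set \<Rightarrow> ('a \<times> 'a) set \<Rightarrow> ('a \<Rightarrow> 'a set) \<Rightarrow> ('a \<Rightarrow> 'a set) \<Rightarrow> ('a \<times> 'a) set" where
  "uncovered V E Lf Lb = {(u, w). u \<in> V \<and> w \<in> V \<and> reach E u w \<and> \<not> covered E Lf Lb u w}"

definition center_edges :: "'a set \<Rightarrow> ('a \<times> 'a) set \<Rightarrow> ('a \<Rightarrow> 'a set) \<Rightarrow> ('a \<Rightarrow> 'a set) \<Rightarrow> 'a \<Rightarrow> ('a \<times> 'a) set" where
  "center_edges V E Lf Lb v = {(u, w) \<in> uncovered V E Lf Lb. on_sp E u w v}"

type_synonym 'a ghhl_state = "'a set \<times> ('a \<Rightarrow> 'a set) \<times> ('a \<Rightarrow> 'a set)"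

text \<open>One iteration: S = already selected vertices. Ties in the greedy choice are
  arbitrary (any maximiser may be chosen).\<close>
definition ghhl_step :: "'a set \<Rightarrow> ('a \<times> 'a) set \<Rightarrow> 'a ghhl_state \<Rightarrow> 'a ghhl_state \<Rightarrow> bool" where
  "ghhl_step V E st st' \<longleftrightarrow>
     (case st of (S, Lf, Lb) \<Rightarrow>
       uncovered V E Lf Lb \<noteq> {} \<and>
       (\<exists>v \<in> V - S.
          (\<forall>x \<in> V - S. card (center_edges V E Lf Lb x) \<le> card (center_edges V E Lf Lb v)) \<and>
          st' = (insert v S,
                 (\<lambda>u. if u \<in> fst ` center_edges V E Lf Lb v then insert v (Lf u) else Lf u),
                 (\<lambda>w. if w \<in> snd ` center_edges V E Lf Lb v then insert v (Lb w) else Lb w))))"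

definition ghhl_output :: "'a set \<Rightarrow> ('a \<times> 'a) set \<Rightarrow> ('a \<Rightarrow> 'a set) \<Rightarrow> ('a \<Rightarrow> 'a set) \<Rightarrow> bool" where
  "ghhl_output V E Lf Lb \<longleftrightarrow>
     (\<exists>S. (ghhl_step V E)\<^sup>*\<^sup>* ({}, (\<lambda>_. {}), (\<lambda>_. {})) (S, Lf, Lb) \<and> uncovered V E Lf Lb = {})"

end

theory Submission
  imports Defs
begin

text \<open>Take k sources, each with an arc to every one of k+1 middle vertices, and give every middle
  vertex k leaf children, so n = k^2 + 3k + 1. Labelling each source with itself and all middle
  vertices, and each leaf with itself and its parent, is a hierarchical hub labeling of size O(n).
  g-HHL instead starts with the sources: while a source x has an empty forward label, its center
  graph contains all k^2 + 2k + 2 pairs (x, w) with w reachable from x, whereas the center graph of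
  any other vertex has at most (k+1)^2 edges. Selecting a source x puts x into the backward label
  of every leaf, so in the end each of the (k+1)k leaves carries all k sources, for a total of
  k^2(k+1) = \<Omega>(n^(3/2)).\<close>

lemma walk_nth_rtrancl:
  assumes "walk E p" "i \<le> j" "j < length p"
  shows "(p!i, p!j) \<in> E\<^sup>*"
  using assms(2,3)
proof (induction j)
  case 0 then show ?case by simp
next
  case (Suc j)
  show ?case
  proof (cases "i = Suc j")
    case False
    then have "(p!i, p!j) \<in> E\<^sup>*" using Suc by simp
    moreover have "(p!j, p!Suc j) \<in> E" using assms(1) Suc.prems unfolding walk_def by blast
    ultimately show ?thesis by (rule rtrancl_into_rtrancl)
  qed simp
qed

lemma walk_mem_rtrancl:
  assumes "walk E p" "v \<in> set p"
  shows "(hd p, v) \<in> E\<^sup>*" "(v, last p) \<in> E\<^sup>*"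
proof -
  have "p \<noteq> []" using assms(1) unfolding walk_def by simp
  moreover obtain i where "i < length p" "p!i = v" using assms(2) by (auto simp: in_set_conv_nth)
  ultimately show "(hd p, v) \<in> E\<^sup>*" "(v, last p) \<in> E\<^sup>*"
    using walk_nth_rtrancl[OF assms(1), of 0 i] walk_nth_rtrancl[OF assms(1), of i "length p - 1"]
    by (auto simp: hd_conv_nth last_conv_nth)
qed

lemma on_sp_rtrancl:
  assumes "on_sp E u w v"
  shows "(u, v) \<in> E\<^sup>*" "(v, w) \<in> E\<^sup>*"
proof -
  obtain p where "walk E p" "hd p = u" "last p = w" "v \<in> set p"
    using assms unfolding on_sp_def spath_def by blast
  then show "(u, v) \<in> E\<^sup>*" "(v, w) \<in> E\<^sup>*" using walk_mem_rtrancl by metis+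
qed

lemma reach_rtrancl:
  assumes "reach E u w"
  shows "(u, w) \<in> E\<^sup>*"
proof -
  obtain p where p: "walk E p" "hd p = u" "last p = w" using assms unfolding reach_def by blast
  then have "last p \<in> set p" unfolding walk_def by (metis last_in_set)
  then show ?thesis using walk_mem_rtrancl(1)[OF p(1)] p(2,3) by simp
qed

lemma reach_ex_spath:
  assumes "reach E u w"
  obtains p where "spath E u w p"
proof -
  obtain p where "walk E p \<and> hd p = u \<and> last p = w" using assms unfolding reach_def by blast
  from ex_has_least_nat[of "\<lambda>p. walk E p \<and> hd p = u \<and> last p = w", OF this, of length]
  show ?thesis using that unfolding spath_def by blast
qed

lemma on_sp_start: "reach E u w \<Longrightarrow> on_sp E u w u"
  by (elim reach_ex_spath) (auto simp: on_sp_def spath_def walk_def intro: hd_in_set)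

lemma on_sp_end: "reach E u w \<Longrightarrow> on_sp E u w w"
  by (elim reach_ex_spath) (auto simp: on_sp_def spath_def walk_def intro: last_in_set)

lemma reach_refl: "reach E u u"
  unfolding reach_def walk_def by (rule exI[of _ "[u]"]) simp

lemma reach_two_arcs: "(u, v) \<in> E \<Longrightarrow> (v, w) \<in> E \<Longrightarrow> reach E u w"
  unfolding reach_def walk_def by (rule exI[of _ "[u, v, w]"]) (auto simp: less_Suc_eq nth_Cons')

lemma reach_arc: "(u, w) \<in> E \<Longrightarrow> reach E u w"
  unfolding reach_def walk_def by (rule exI[of _ "[u, w]"]) simp

lemma walk_length_ge_3:
  assumes "walk E q" "hd q = u" "last q = w" "u \<noteq> w" "(u, w) \<notin> E"
  shows "3 \<le> length q"
proof (rule ccontr)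
  assume "\<not> 3 \<le> length q"
  with assms(1) consider a where "q = [a]" | a b where "q = [a, b]"
    unfolding walk_def by (cases q; cases "tl q"; cases "tl (tl q)") auto
  then show False using assms unfolding walk_def by cases auto
qed

lemma on_sp_two_arcs:
  assumes "(u, v) \<in> E" "(v, w) \<in> E" "u \<noteq> w" "(u, w) \<notin> E"
  shows "on_sp E u w v"
proof -
  have "walk E [u, v, w]" using assms unfolding walk_def by (auto simp: less_Suc_eq nth_Cons')
  moreover have "length [u, v, w] \<le> length q" if "walk E q" "hd q = u" "last q = w" for q
    using walk_length_ge_3[OF that assms(3,4)] by simp
  ultimately show ?thesis unfolding on_sp_def spath_def by (intro exI[of _ "[u, v, w]"]) simp
qed

lemma center_edges_subset_rtrancl:
  "center_edges V E Lf Lb v \<subseteq> {u. (u, v) \<in> E\<^sup>*} \<times> {w. (v, w) \<in> E\<^sup>*}"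
proof
  fix p assume "p \<in> center_edges V E Lf Lb v"
  then obtain u w where "p = (u, w)" "on_sp E u w v" unfolding center_edges_def by blast
  then show "p \<in> {u. (u, v) \<in> E\<^sup>*} \<times> {w. (v, w) \<in> E\<^sup>*}"
    using on_sp_rtrancl[of E u w v] by simp
qed

lemma finite_center_edges: "finite V \<Longrightarrow> finite (center_edges V E Lf Lb v)"
  by (rule finite_subset[of _ "V \<times> V"]) (auto simp: center_edges_def uncovered_def)

lemma card_center_edges_le:
  assumes "finite A" "finite B" "{u. (u, v) \<in> E\<^sup>*} \<subseteq> A" "{w. (v, w) \<in> E\<^sup>*} \<subseteq> B"
  shows "card (center_edges V E Lf Lb v) \<le> card A * card B"
proof -
  have "center_edges V E Lf Lb v \<subseteq> A \<times> B"
    using center_edges_subset_rtrancl[of V E Lf Lb v] Sigma_mono[OF assms(3,4)] by (rule order_trans)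
  then have "card (center_edges V E Lf Lb v) \<le> card (A \<times> B)"
    using assms(1,2) by (intro card_mono) simp_all
  then show ?thesis by (simp add: card_cartesian_product)
qed

lemma center_edges_unlabelled:
  assumes "x \<in> V" "Lf x = {}"
  shows "{x} \<times> {w \<in> V. reach E x w} \<subseteq> center_edges V E Lf Lb x"
  using assms on_sp_start unfolding center_edges_def uncovered_def covered_def by auto

lemma uncovered_empty_imp_fwd_label:
  assumes "uncovered V E Lf Lb = {}" "x \<in> V"
  shows "Lf x \<noteq> {}"
  using assms reach_refl unfolding uncovered_def covered_def by fastforce

lemma ghhl_stepE:
  assumes "ghhl_step V E (S, Lf, Lb) st'"
  obtains v where "v \<in> V - S"
    "\<And>x. x \<in> V - S \<Longrightarrow> card (center_edges V E Lf Lb x) \<le> card (center_edges V E Lf Lb v)"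
    "st' = (insert v S,
            (\<lambda>u. if u \<in> fst ` center_edges V E Lf Lb v then insert v (Lf u) else Lf u),
            (\<lambda>w. if w \<in> snd ` center_edges V E Lf Lb v then insert v (Lb w) else Lb w))"
  using assms unfolding ghhl_step_def by auto

lemma ghhl_output_invariant:
  assumes "ghhl_output V E Lf Lb" "P ({}, \<lambda>_. {}, \<lambda>_. {})"
    "\<And>st st'. ghhl_step V E st st' \<Longrightarrow> P st \<Longrightarrow> P st'"
  obtains S where "P (S, Lf, Lb)"
proof -
  obtain S where "(ghhl_step V E)\<^sup>*\<^sup>* ({}, \<lambda>_. {}, \<lambda>_. {}) (S, Lf, Lb)"
    using assms(1) unfolding ghhl_output_def by blast
  then have "P (S, Lf, Lb)" by (induction rule: rtranclp_induct) (use assms(2,3) in auto)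
  then show ?thesis by (rule that)
qed

definition mids :: "nat \<Rightarrow> nat set" where "mids k = {..k}"
definition sources :: "nat \<Rightarrow> nat set" where "sources k = {k+1..<2*k+1}"
definition leaves :: "nat \<Rightarrow> nat set" where "leaves k = {2*k+1..<2*k+1+(k+1)*k}"
definition children :: "nat \<Rightarrow> nat \<Rightarrow> nat set" where
  "children k m = {2*k+1+m*k..<2*k+1+m*k+k}"
definition parent :: "nat \<Rightarrow> nat \<Rightarrow> nat" where "parent k b = (b - (2*k+1)) div k"

definition fam_verts :: "nat \<Rightarrow> nat set" where "fam_verts k = {..<2*k+1+(k+1)*k}"
definition fam_arcs :: "nat \<Rightarrow> (nat \<times> nat) set" where
  "fam_arcs k = sources k \<times> mids k \<union> Sigma (mids k) (children k)"

lemma fam_verts_eq: "fam_verts k = sources k \<union> mids k \<union> leaves k"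
  unfolding fam_verts_def sources_def mids_def leaves_def by auto

lemma fam_classes_distinct:
  "x \<in> sources k \<Longrightarrow> x \<notin> mids k" "x \<in> sources k \<Longrightarrow> x \<notin> leaves k"
  "x \<in> mids k \<Longrightarrow> x \<notin> leaves k"
  unfolding sources_def mids_def leaves_def by auto

lemma finite_fam_classes [simp]:
  "finite (sources k)" "finite (mids k)" "finite (leaves k)" "finite (children k m)"
  unfolding sources_def mids_def leaves_def children_def by simp_all

lemma finite_fam_verts [simp]: "finite (fam_verts k)"
  unfolding fam_verts_def by simp

lemma card_fam_verts: "card (fam_verts k) = k*k + 3*k + 1"
  unfolding fam_verts_def by (simp add: algebra_simps)

lemma card_sources: "card (sources k) = k"
  unfolding sources_def by simp

lemma card_leaves: "card (leaves k) = (k+1)*k"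
  unfolding leaves_def by simp

lemma children_subset_leaves:
  assumes "m \<in> mids k"
  shows "children k m \<subseteq> leaves k"
proof -
  have "m*k + k \<le> (k+1)*k" using assms unfolding mids_def by simp
  then show ?thesis unfolding children_def leaves_def by auto
qed

lemma parent_children:
  assumes "b \<in> children k m"
  shows "parent k b = m"
proof -
  obtain l where "l < k" "b = 2*k+1+m*k+l" using assms unfolding children_def
    by (metis add_less_cancel_left atLeastLessThan_iff le_iff_add)
  then show ?thesis unfolding parent_def by simp
qed

lemma leaf_in_children_parent:
  assumes "b \<in> leaves k"
  shows "parent k b \<in> mids k" "b \<in> children k (parent k b)"
proof -
  define d where "d = b - (2*k+1)"
  have d: "d < (k+1)*k" "b = 2*k+1+d" using assms unfolding d_def leaves_def by auto
  then have "k > 0" by (cases k) auto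
  have "d div k < k+1" using d(1) by (simp add: less_mult_imp_div_less)
  then show "parent k b \<in> mids k" unfolding parent_def mids_def d_def[symmetric] by simp
  have "d div k * k \<le> d" "d < d div k * k + k"
    using \<open>k > 0\<close> div_mult_mod_eq[of d k] mod_less_divisor[of k d] by linarith+
  then show "b \<in> children k (parent k b)"
    unfolding parent_def children_def d_def[symmetric] using d(2) by simp
qed

lemma fam_arcs_subset: "fam_arcs k \<subseteq> fam_verts k \<times> fam_verts k"
  unfolding fam_arcs_def fam_verts_eq using children_subset_leaves by blast

lemma fam_rtrancl_cases:
  assumes "(u, w) \<in> (fam_arcs k)\<^sup>*"
  obtains "u = w" | "u \<in> sources k" "w \<in> mids k" | "u \<in> mids k" "w \<in> children k u"
    | "u \<in> sources k" "w \<in> leaves k"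
  using assms
proof (induction arbitrary: thesis rule: rtrancl_induct)
  case (step y z)
  have yz: "y \<in> sources k \<and> z \<in> mids k \<or> y \<in> mids k \<and> z \<in> children k y"
    using step.hyps(2) unfolding fam_arcs_def by blast
  show ?case
  proof (rule step.IH)
    assume "u = y" then show ?thesis using yz step.prems by blast
  next
    assume "u \<in> sources k" "y \<in> mids k"
    then show ?thesis using yz step.prems(4) children_subset_leaves fam_classes_distinct by blast
  next
    assume "u \<in> mids k" "y \<in> children k u"
    then show ?thesis using yz children_subset_leaves fam_classes_distinct by blast
  next
    assume "u \<in> sources k" "y \<in> leaves k"
    then show ?thesis using yz children_subset_leaves fam_classes_distinct by blast
  qed
qed simp

lemma reach_from_source:
  assumes "x \<in> sources k" "w \<in> fam_verts k - sources k"
  shows "reach (fam_arcs k) x w"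
proof -
  have "w \<in> mids k \<or> w \<in> leaves k" using assms(2) unfolding fam_verts_eq by blast
  then show ?thesis
  proof
    assume "w \<in> mids k"
    then show ?thesis using assms(1) by (intro reach_arc) (simp add: fam_arcs_def)
  next
    assume "w \<in> leaves k"
    then have "(x, parent k w) \<in> fam_arcs k" "(parent k w, w) \<in> fam_arcs k"
      using assms(1) leaf_in_children_parent unfolding fam_arcs_def by auto
    then show ?thesis by (rule reach_two_arcs)
  qed
qed

lemma card_center_edges_source:
  assumes "x \<in> sources k" "Lf x = {}"
  shows "k*k + 2*k + 2 \<le> card (center_edges (fam_verts k) (fam_arcs k) Lf Lb x)"
proof -
  let ?W = "insert x (fam_verts k - sources k)"
  have "x \<in> fam_verts k" using assms(1) fam_verts_eq by blast
  then have "?W \<subseteq> {w \<in> fam_verts k. reach (fam_arcs k) x w}"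
    using reach_from_source[OF assms(1)] reach_refl[of "fam_arcs k" x] by auto
  then have "{x} \<times> ?W \<subseteq> {x} \<times> {w \<in> fam_verts k. reach (fam_arcs k) x w}" by blast
  also have "\<dots> \<subseteq> center_edges (fam_verts k) (fam_arcs k) Lf Lb x"
    by (rule center_edges_unlabelled[where Lf=Lf, OF \<open>x \<in> fam_verts k\<close> assms(2)])
  finally have "{x} \<times> ?W \<subseteq> center_edges (fam_verts k) (fam_arcs k) Lf Lb x" .
  moreover have "finite (center_edges (fam_verts k) (fam_arcs k) Lf Lb x)"
    by (simp add: finite_center_edges)
  ultimately have "card ({x} \<times> ?W) \<le> card (center_edges (fam_verts k) (fam_arcs k) Lf Lb x)"
    by (rule card_mono[rotated])
  moreover have "card (fam_verts k - sources k) = k*k + 2*k + 1"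
  proof -
    have "sources k \<subseteq> fam_verts k" unfolding fam_verts_eq by blast
    then show ?thesis using card_Diff_subset[of "sources k" "fam_verts k"]
      by (simp add: card_fam_verts card_sources)
  qed
  ultimately show ?thesis using assms(1) by (simp add: card_cartesian_product)
qed

lemma fam_rtrancl_into_source:
  assumes "(u, x) \<in> (fam_arcs k)\<^sup>*" "x \<in> sources k"
  shows "u = x"
  using assms(1)
  by (cases rule: fam_rtrancl_cases)
    (use assms(2) in \<open>auto dest: fam_classes_distinct children_subset_leaves[THEN subsetD]\<close>)

lemma fam_rtrancl_into_mid:
  assumes "(u, m) \<in> (fam_arcs k)\<^sup>*" "m \<in> mids k"
  shows "u \<in> insert m (sources k)"
  using assms(1)
  by (cases rule: fam_rtrancl_cases)
    (use assms(2) in \<open>auto dest: fam_classes_distinct children_subset_leaves[THEN subsetD]\<close>)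

lemma fam_rtrancl_from_mid:
  assumes "(m, w) \<in> (fam_arcs k)\<^sup>*" "m \<in> mids k"
  shows "w \<in> insert m (children k m)"
  using assms(1)
  by (cases rule: fam_rtrancl_cases) (use assms(2) in \<open>auto dest: fam_classes_distinct\<close>)

lemma fam_rtrancl_into_leaf:
  assumes "(u, b) \<in> (fam_arcs k)\<^sup>*"
  shows "u \<in> insert b (sources k \<union> mids k)"
  using assms by (cases rule: fam_rtrancl_cases) auto

lemma fam_rtrancl_from_leaf:
  assumes "(b, w) \<in> (fam_arcs k)\<^sup>*" "b \<in> leaves k"
  shows "w = b"
  using assms(1)
  by (cases rule: fam_rtrancl_cases) (use assms(2) in \<open>auto dest: fam_classes_distinct\<close>)

lemma card_center_edges_non_source:
  assumes "v \<in> fam_verts k - sources k"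
  shows "card (center_edges (fam_verts k) (fam_arcs k) Lf Lb v) \<le> (k+1)*(k+1)"
proof -
  have "v \<in> mids k \<or> v \<in> leaves k" using assms unfolding fam_verts_eq by blast
  then show ?thesis
  proof
    assume v: "v \<in> mids k"
    have "card (center_edges (fam_verts k) (fam_arcs k) Lf Lb v)
        \<le> card (insert v (sources k)) * card (insert v (children k v))"
      by (rule card_center_edges_le)
        (auto dest: fam_rtrancl_into_mid[OF _ v] fam_rtrancl_from_mid[OF _ v])
    also have "\<dots> = (k+1)*(k+1)"
      using v by (simp add: card_insert_if mids_def sources_def children_def)
    finally show ?thesis .
  next
    assume v: "v \<in> leaves k"
    have "card (center_edges (fam_verts k) (fam_arcs k) Lf Lb v)
        \<le> card (insert v (sources k \<union> mids k)) * card {v}"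
      by (rule card_center_edges_le)
        (auto dest: fam_rtrancl_into_leaf fam_rtrancl_from_leaf[OF _ v])
    also have "sources k \<union> mids k = {..2*k}" by (auto simp: sources_def mids_def)
    also have "card (insert v {..2*k}) * card {v} \<le> 2*k + 2" by (simp add: card_insert_if)
    also have "\<dots> \<le> (k+1)*(k+1)" using v unfolding leaves_def by (cases k) auto
    finally show ?thesis .
  qed
qed

definition greedy_inv :: "nat \<Rightarrow> nat ghhl_state \<Rightarrow> bool" where
  "greedy_inv k = (\<lambda>(S, Lf, Lb). (\<forall>x \<in> sources k - S. Lf x = {}) \<and>
     (\<forall>b \<in> leaves k. \<forall>x \<in> sources k \<inter> S. x \<in> Lb b) \<and> (\<forall>w. finite (Lb w)))"

lemma greedy_selects_source:
  assumes "v \<in> fam_verts k - S"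
    "\<And>x. x \<in> fam_verts k - S \<Longrightarrow> card (center_edges (fam_verts k) (fam_arcs k) Lf Lb x)
                                  \<le> card (center_edges (fam_verts k) (fam_arcs k) Lf Lb v)"
    "x \<in> sources k - S" "Lf x = {}"
  shows "v \<in> sources k"
proof (rule ccontr)
  assume "v \<notin> sources k"
  have "x \<in> fam_verts k - S" using assms(3) fam_verts_eq by blast
  have "k*k + 2*k + 2 \<le> card (center_edges (fam_verts k) (fam_arcs k) Lf Lb x)"
    using card_center_edges_source assms(3,4) by blast
  also have "\<dots> \<le> card (center_edges (fam_verts k) (fam_arcs k) Lf Lb v)"
    by (rule assms(2)) fact
  also have "\<dots> \<le> (k+1)*(k+1)"
    using card_center_edges_non_source assms(1) \<open>v \<notin> sources k\<close> by blast
  finally show False by (simp add: algebra_simps)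
qed

lemma greedy_inv_step:
  assumes "ghhl_step (fam_verts k) (fam_arcs k) st st'" "greedy_inv k st"
  shows "greedy_inv k st'"
proof -
  obtain S Lf Lb where st: "st = (S, Lf, Lb)" by (cases st)
  let ?C = "center_edges (fam_verts k) (fam_arcs k) Lf Lb"
  obtain v where v: "v \<in> fam_verts k - S"
    and max: "\<And>x. x \<in> fam_verts k - S \<Longrightarrow> card (?C x) \<le> card (?C v)"
    and st': "st' = (insert v S, (\<lambda>u. if u \<in> fst ` ?C v then insert v (Lf u) else Lf u),
                                 (\<lambda>w. if w \<in> snd ` ?C v then insert v (Lb w) else Lb w))"
    using assms(1) unfolding st by (rule ghhl_stepE) (rule that)
  have unsel: "Lf x = {}" if "x \<in> sources k - S" for x
    using assms(2) that unfolding st greedy_inv_def by auto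
  have sel: "x \<in> Lb b" if "b \<in> leaves k" "x \<in> sources k \<inter> S" for b x
    using assms(2) that unfolding st greedy_inv_def by auto
  have fin: "finite (Lb w)" for w
    using assms(2) unfolding st greedy_inv_def by auto
  have "x \<notin> fst ` ?C v" if x: "x \<in> sources k - insert v S" for x
  proof
    assume "x \<in> fst ` ?C v"
    then obtain w where "(x, w) \<in> ?C v" by force
    then have "(x, v) \<in> (fam_arcs k)\<^sup>*"
      using center_edges_subset_rtrancl[of "fam_verts k" "fam_arcs k" Lf Lb v] by blast
    moreover have "v \<in> sources k" using greedy_selects_source[OF v max] x unsel by blast
    ultimately show False using fam_rtrancl_into_source x by blast
  qed
  moreover have "b \<in> snd ` ?C v" if "b \<in> leaves k" "v \<in> sources k - S" for b
  proof -
    have "b \<in> fam_verts k - sources k" using that(1) fam_verts_eq fam_classes_distinct(2) by blast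
    then have "reach (fam_arcs k) v b" using reach_from_source that(2) by blast
    moreover have "b \<in> fam_verts k" using \<open>b \<in> fam_verts k - sources k\<close> by blast
    ultimately have "(v, b) \<in> ?C v"
      using center_edges_unlabelled[where Lf=Lf, of v "fam_verts k"] v unsel that(2) by blast
    then show ?thesis by force
  qed
  ultimately show ?thesis
    unfolding st' greedy_inv_def using v unsel sel fin by auto
qed

lemma greedy_size_lower_bound:
  assumes "ghhl_output (fam_verts k) (fam_arcs k) Lf Lb"
  shows "(k+1)*k*k \<le> hl_size (fam_verts k) Lf Lb"
proof -
  have "greedy_inv k ({}, \<lambda>_. {}, \<lambda>_. {})" by (simp add: greedy_inv_def)
  then obtain S where inv: "greedy_inv k (S, Lf, Lb)"
    using ghhl_output_invariant[where P="greedy_inv k", OF assms] greedy_inv_step by blast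
  have all_covered: "uncovered (fam_verts k) (fam_arcs k) Lf Lb = {}"
    using assms unfolding ghhl_output_def by blast
  have "sources k \<subseteq> S"
  proof
    fix x assume x: "x \<in> sources k"
    then have "x \<in> fam_verts k" unfolding fam_verts_eq by blast
    then have "Lf x \<noteq> {}" by (rule uncovered_empty_imp_fwd_label[OF all_covered])
    then show "x \<in> S" using inv x unfolding greedy_inv_def by auto
  qed
  then have "sources k \<subseteq> Lb b" "finite (Lb b)" if "b \<in> leaves k" for b
    using inv that unfolding greedy_inv_def by (auto simp: subset_iff)
  then have "k \<le> card (Lb b)" if "b \<in> leaves k" for b
    using card_mono that card_sources by metis
  then have "(k+1)*k*k \<le> (\<Sum>b \<in> leaves k. card (Lb b))"
    using sum_mono[of "leaves k" "\<lambda>_. k"] card_leaves by simp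
  also have "\<dots> \<le> (\<Sum>v \<in> fam_verts k. card (Lb v))"
    by (rule sum_mono2) (auto simp: fam_verts_eq)
  also have "\<dots> \<le> hl_size (fam_verts k) Lf Lb"
    unfolding hl_size_def by (rule sum_mono) simp
  finally show ?thesis .
qed

definition opt_fwd :: "nat \<Rightarrow> nat \<Rightarrow> nat set" where
  "opt_fwd k v = (if v \<in> sources k then insert v (mids k) else {v})"

definition opt_bwd :: "nat \<Rightarrow> nat \<Rightarrow> nat set" where
  "opt_bwd k v = (if v \<in> leaves k then {v, parent k v} else {v})"

lemma opt_labels_cover:
  assumes "reach (fam_arcs k) u w"
  shows "covered (fam_arcs k) (opt_fwd k) (opt_bwd k) u w"
  using reach_rtrancl[OF assms]
proof (cases rule: fam_rtrancl_cases)
  case 1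
  then have "u \<in> opt_fwd k u \<inter> opt_bwd k w" by (simp add: opt_fwd_def opt_bwd_def)
  then show ?thesis unfolding covered_def using on_sp_start[OF assms] by blast
next
  case 2
  then have "w \<in> opt_fwd k u \<inter> opt_bwd k w"
    using fam_classes_distinct(3) by (simp add: opt_fwd_def opt_bwd_def)
  then show ?thesis unfolding covered_def using on_sp_end[OF assms] by blast
next
  case 3
  then have "u \<in> opt_fwd k u \<inter> opt_bwd k w"
    using children_subset_leaves parent_children by (auto simp: opt_fwd_def opt_bwd_def)
  then show ?thesis unfolding covered_def using on_sp_start[OF assms] by blast
next
  case 4
  let ?m = "parent k w"
  have m: "?m \<in> mids k" "w \<in> children k ?m" using leaf_in_children_parent 4(2) by blast+
  have "(u, ?m) \<in> fam_arcs k" "(?m, w) \<in> fam_arcs k"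
    using 4(1) m unfolding fam_arcs_def by blast+
  moreover have "u \<noteq> w" using 4 fam_classes_distinct(2) by blast
  moreover have "(u, w) \<notin> fam_arcs k"
    using 4 fam_classes_distinct(1,3) unfolding fam_arcs_def by blast
  ultimately have "on_sp (fam_arcs k) u w ?m" by (rule on_sp_two_arcs)
  moreover have "?m \<in> opt_fwd k u \<inter> opt_bwd k w"
    using 4 m by (simp add: opt_fwd_def opt_bwd_def)
  ultimately show ?thesis unfolding covered_def by blast
qed

lemma opt_label_le: "u \<in> opt_fwd k v \<union> opt_bwd k v \<Longrightarrow> u \<le> v"
  using leaf_in_children_parent(1)[of v k]
  by (auto simp: opt_fwd_def opt_bwd_def sources_def mids_def leaves_def split: if_splits)

lemma opt_labels_HHL: "is_HHL (fam_verts k) (fam_arcs k) (opt_fwd k) (opt_bwd k)"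
proof -
  have "opt_fwd k v \<subseteq> fam_verts k \<and> opt_bwd k v \<subseteq> fam_verts k" if "v \<in> fam_verts k" for v
    using that leaf_in_children_parent(1)[of v k] unfolding opt_fwd_def opt_bwd_def fam_verts_eq
    by auto
  then have "is_HL (fam_verts k) (fam_arcs k) (opt_fwd k) (opt_bwd k)"
    unfolding is_HL_def using opt_labels_cover by blast
  moreover have "bij_betw Suc (fam_verts k) {1..card (fam_verts k)}"
    unfolding fam_verts_def by (simp add: bij_betw_def image_Suc_lessThan)
  ultimately show ?thesis unfolding is_HHL_def using opt_label_le by fastforce
qed

lemma opt_labels_size: "hl_size (fam_verts k) (opt_fwd k) (opt_bwd k) \<le> 4 * card (fam_verts k)"
proof -
  have "card (opt_fwd k v) + card (opt_bwd k v) \<le> 3 + (if v \<in> sources k then k else 0)" for v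
  proof -
    have "card (opt_bwd k v) \<le> 2" by (simp add: opt_bwd_def card_insert_if)
    moreover have "card (opt_fwd k v) = (if v \<in> sources k then k + 2 else 1)"
      using fam_classes_distinct(1)[of v k] by (simp add: opt_fwd_def mids_def)
    moreover have "v \<in> sources k \<Longrightarrow> card (opt_bwd k v) = 1"
      using fam_classes_distinct(2)[of v k] by (simp add: opt_bwd_def)
    ultimately show ?thesis by auto
  qed
  then have "hl_size (fam_verts k) (opt_fwd k) (opt_bwd k)
      \<le> (\<Sum>v \<in> fam_verts k. 3 + (if v \<in> sources k then k else 0))"
    unfolding hl_size_def by (rule sum_mono)
  also have "\<dots> = 3 * card (fam_verts k) + k * card (fam_verts k \<inter> sources k)"
    by (simp add: sum.distrib sum.inter_restrict[symmetric])
  also have "fam_verts k \<inter> sources k = sources k" unfolding fam_verts_eq by blast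
  also have "3 * card (fam_verts k) + k * card (sources k) \<le> 4 * card (fam_verts k)"
    by (simp add: card_fam_verts card_sources)
  finally show ?thesis .
qed

lemma fam_size_powr_le:
  assumes "k \<ge> 1"
  shows "real (card (fam_verts k)) powr (3/2) \<le> 15 * real ((k+1)*k*k)"
proof -
  let ?n = "real (card (fam_verts k))"
  have "card (fam_verts k) \<le> 5*(k*k)"
    using assms le_square[of k] unfolding card_fam_verts by linarith
  then have "?n \<le> real (5*(k*k))" by (simp only: of_nat_le_iff)
  then have n: "?n \<le> 5 * real k ^ 2" by (simp add: power2_eq_square)
  have "?n powr (3/2) = ?n powr (1 + 1/2)" by simp
  also have "\<dots> = ?n * sqrt ?n" unfolding powr_add by (simp add: powr_half_sqrt)
  also have "\<dots> \<le> (5 * real k ^ 2) * (3 * real k)"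
  proof (rule mult_mono)
    show "sqrt ?n \<le> 3 * real k"
      by (rule real_le_lsqrt) (use n assms in \<open>auto simp: power2_eq_square\<close>)
  qed (use n in auto)
  also have "\<dots> \<le> 15 * real ((k+1)*k*k)" by (simp add: power2_eq_square algebra_simps)
  finally show ?thesis .
qed

theorem mainTheorem7:
  shows "\<exists>c::real. c > 0 \<and> (\<exists>C::real. \<forall>N::nat.
     \<exists>(V::nat set) (E::(nat \<times> nat) set).
        finite V \<and> card V \<ge> N \<and> E \<subseteq> V \<times> V \<and>
        (\<forall>Lf Lb. ghhl_output V E Lf Lb \<longrightarrow>
            real (hl_size V Lf Lb) \<ge> c * real (card V) powr (3/2)) \<and>
        (\<exists>Lf Lb. is_HHL V E Lf Lb \<and> real (hl_size V Lf Lb) \<le> C * real (card V)))"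
proof (rule exI[of _ "1/15"], intro conjI exI[of _ "4::real"] allI)
  fix N :: nat
  define k where "k = N + 1"
  have greedy: "1/15 * real (card (fam_verts k)) powr (3/2) \<le> real (hl_size (fam_verts k) Lf Lb)"
    if "ghhl_output (fam_verts k) (fam_arcs k) Lf Lb" for Lf Lb
    using greedy_size_lower_bound[OF that] fam_size_powr_le[of k] k_def
    unfolding of_nat_le_iff[symmetric] by linarith
  have opt: "real (hl_size (fam_verts k) (opt_fwd k) (opt_bwd k)) \<le> 4 * real (card (fam_verts k))"
    using opt_labels_size[of k] by linarith
  have size: "N \<le> card (fam_verts k)" unfolding card_fam_verts k_def by simp
  show "\<exists>(V::nat set) (E::(nat \<times> nat) set). finite V \<and> N \<le> card V \<and> E \<subseteq> V \<times> V \<and>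
      (\<forall>Lf Lb. ghhl_output V E Lf Lb \<longrightarrow>
          1/15 * real (card V) powr (3/2) \<le> real (hl_size V Lf Lb)) \<and>
      (\<exists>Lf Lb. is_HHL V E Lf Lb \<and> real (hl_size V Lf Lb) \<le> 4 * real (card V))"
  proof (rule exI[of _ "fam_verts k"], rule exI[of _ "fam_arcs k"], intro conjI)
    show "\<exists>Lf Lb. is_HHL (fam_verts k) (fam_arcs k) Lf Lb \<and>
        real (hl_size (fam_verts k) Lf Lb) \<le> 4 * real (card (fam_verts k))"
      using opt opt_labels_HHL by blast
  qed (use size greedy fam_arcs_subset in auto)
qed simp

end
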